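(* Let $n$ be a positive integer. Define the graph $G=(V,E)$ with vertex set $V=\{\{i,j\}: i,j\in[n],\ i\neq j\}$ and edge set $E=\{(\{i,j\},\{j,k\}): i,j,k\in[n] \text{ pairwise distinct}\}$. Then there exists a subgraph $G'=(V,E')$ with $E'\subseteq E$ satisfying $|E'|\le n^2$ and $$\operatorname{dist}_{G'}(v_1,v_2)\le 4(\log_2(n)+1)\quad\text{for all } v_1,v_2\in V.$$
   Context: $\operatorname{dist}_{G'}$ denotes the shortest-path distance in $G'$. *)

theory Defs
  imports Main "HOL-Library.Extended_Nat"
begin

definition pairV :: "nat \<Rightarrow> nat set set" where
  "pairV n = {{i, j} | i j. i \<in> {1..n} \<and> j \<in> {1..n} \<and> i \<noteq> j}"

definition pairE :: "nat \<Rightarrow> nat set set set" where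
  "pairE n = {{{i, j}, {j, k}} | i j k. i \<in> {1..n} \<and> j \<in> {1..n} \<and> k \<in> {1..n}
                 \<and> i \<noteq> j \<and> j \<noteq> k \<and> i \<noteq> k}"

definition is_walk :: "'a set set \<Rightarrow> 'a list \<Rightarrow> bool" where
  "is_walk F xs = (xs \<noteq> [] \<and> (\<forall>i < length xs - 1. {xs ! i, xs ! Suc i} \<in> F))"

text \<open>Shortest-path distance (infinity if no path).\<close>
definition graph_dist :: "'a set set \<Rightarrow> 'a \<Rightarrow> 'a \<Rightarrow> enat" where
  "graph_dist F u v = (INF xs \<in> {xs. is_walk F xs \<and> hd xs = u \<and> last xs = v}. enat (length xs - 1))"

end

theory Submission
  imports Defs Complex_Main
begin

text \<open>
  The logarithmic bound is far from tight: a sparse spanning subgraph of diameter at most 4 exists.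
  Take the vertex \<open>{1,2}\<close> as a hub. Each \<open>{1,j}\<close> and \<open>{2,j}\<close> is adjacent to the hub, and
  \<open>{i,j}\<close> with \<open>i, j \<ge> 3\<close> reaches it through \<open>{1,i}\<close>. All these edges are of the form
  \<open>{{1,a},{a,b}}\<close> or \<open>{{1,2},{1,b}}\<close>, so they are indexed by pairs \<open>(a,b) \<in> [n]\<^sup>2\<close>;
  hence there are at most \<open>n\<^sup>2\<close> of them, and any two vertices are joined by a walk
  of length at most 4 through the hub.
\<close>

lemma is_walk_singleton [simp]: "is_walk F [x]"
  by (simp add: is_walk_def)

lemma is_walk_Cons_Cons [simp]: "is_walk F (x # y # xs) \<longleftrightarrow> {x, y} \<in> F \<and> is_walk F (y # xs)"
  unfolding is_walk_def by (simp add: All_less_Suc2)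

lemma is_walk_append_join:
  "is_walk F (xs @ [y]) \<Longrightarrow> is_walk F (y # ys) \<Longrightarrow> is_walk F (xs @ y # ys)"
proof (induction xs)
  case Nil
  then show ?case by simp
next
  case (Cons x xs)
  then show ?case by (cases xs) auto
qed

lemma is_walk_rev: "is_walk F xs \<Longrightarrow> is_walk F (rev xs)"
proof (induction xs rule: induct_list012)
  case (3 x y xs)
  have "is_walk F (rev xs @ [y])" using 3 by simp
  moreover have "is_walk F [y, x]" using "3.prems" by (simp add: insert_commute)
  ultimately show ?case using is_walk_append_join[of F "rev xs" y "[x]"] by simp
qed (simp_all add: is_walk_def)

lemma graph_dist_le_walk:
  "is_walk F xs \<Longrightarrow> hd xs = u \<Longrightarrow> last xs = v \<Longrightarrow> graph_dist F u v \<le> enat (length xs - 1)"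
  unfolding graph_dist_def by (rule INF_lower) auto

lemma graph_dist_le_via:
  assumes xs: "is_walk F xs" "hd xs = u" "last xs = w"
    and ys: "is_walk F ys" "hd ys = v" "last ys = w"
  shows "graph_dist F u v \<le> enat (length xs + length ys - 2)"
proof -
  have "xs \<noteq> []" "ys \<noteq> []" using xs(1) ys(1) by (auto simp: is_walk_def)
  then obtain xs' zs where xs': "xs = xs' @ [w]" and zs: "rev ys = w # zs"
    using xs(3) ys(3)
    by (metis append_butlast_last_id rev.simps(2) rev_rev_ident)
  have "is_walk F (xs' @ w # zs)"
    using is_walk_append_join[of F xs' w zs] xs(1) xs' is_walk_rev[OF ys(1)] zs by simp
  moreover have "hd (xs' @ w # zs) = u"
    using xs(2) xs' by (cases xs') auto
  moreover have "last (xs' @ w # zs) = v"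
    using zs ys(2) \<open>ys \<noteq> []\<close> by (metis last_appendR last_rev list.simps(3))
  ultimately have "graph_dist F u v \<le> enat (length (xs' @ w # zs) - 1)"
    by (rule graph_dist_le_walk)
  also have "length (xs' @ w # zs) - 1 = length xs + length ys - 2"
    using xs' arg_cong[OF zs, of length] by simp
  finally show ?thesis .
qed

lemma pairV_ordered:
  assumes "v \<in> pairV n"
  obtains i j where "v = {i, j}" "1 \<le> i" "i < j" "j \<le> n"
proof -
  obtain i j where "v = {i, j}" "i \<in> {1..n}" "j \<in> {1..n}" "i \<noteq> j"
    using assms unfolding pairV_def by blast
  then show thesis
    using that[of i j] that[of j i] by (cases "i < j") (auto simp: insert_commute)
qed

lemma pairE_intro:
  "i \<in> {1..n} \<Longrightarrow> j \<in> {1..n} \<Longrightarrow> k \<in> {1..n} \<Longrightarrow> i \<noteq> j \<Longrightarrow> j \<noteq> k \<Longrightarrow> i \<noteq> k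
    \<Longrightarrow> {{i, j}, {j, k}} \<in> pairE n"
  unfolding pairE_def by blast

definition spoke :: "nat \<Rightarrow> nat \<Rightarrow> nat set set" where
  "spoke a b = (if a = 1 then {{1, 2}, {1, b}} else {{1, a}, {a, b}})"

text \<open>Intersecting with \<^term>\<open>pairE n\<close> discards the degenerate spokes, e.g. \<^term>\<open>spoke 1 1\<close>.\<close>
definition spokes :: "nat \<Rightarrow> nat set set set" where
  "spokes n = pairE n \<inter> case_prod spoke ` ({1..n} \<times> {1..n})"

lemma card_spokes_le: "card (spokes n) \<le> n ^ 2"
proof -
  have "card (spokes n) \<le> card (case_prod spoke ` ({1..n} \<times> {1..n}))"
    unfolding spokes_def by (intro card_mono) auto
  also have "\<dots> \<le> card ({1..n} \<times> {1..n})"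
    by (rule card_image_le) simp
  finally show ?thesis by (simp add: power2_eq_square)
qed

lemma spoke_in_spokes:
  "a \<in> {1..n} \<Longrightarrow> b \<in> {1..n} \<Longrightarrow> spoke a b \<in> pairE n \<Longrightarrow> spoke a b \<in> spokes n"
  unfolding spokes_def by auto

lemma hub_spoke_in_spokes:
  assumes "2 < b" "b \<le> n"
  shows "{{1, 2}, {1, b}} \<in> spokes n"
proof -
  have "{{2, 1}, {1, b}} \<in> pairE n"
    using assms by (intro pairE_intro) auto
  then have "spoke 1 b \<in> pairE n"
    by (simp add: spoke_def insert_commute)
  then show ?thesis
    using spoke_in_spokes[of 1 n b] assms by (simp add: spoke_def)
qed

lemma outer_spoke_in_spokes:
  assumes "1 < a" "a \<le> n" "1 \<le> b" "b \<le> n" "b \<noteq> 1" "b \<noteq> a"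
  shows "{{1, a}, {a, b}} \<in> spokes n"
proof -
  have "spoke a b \<in> pairE n"
    using assms by (simp add: spoke_def pairE_intro)
  then show ?thesis
    using spoke_in_spokes[of a n b] assms by (simp add: spoke_def)
qed

lemma walk_to_hub:
  assumes "v \<in> pairV n"
  obtains xs where "is_walk (spokes n) xs" "hd xs = v" "last xs = {1, 2}" "length xs \<le> 3"
proof -
  obtain i j where v: "v = {i, j}" "1 \<le> i" "i < j" "j \<le> n"
    using pairV_ordered[OF assms] .
  consider "i = 1" "j = 2" | "i = 1" "2 < j" | "i = 2" | "2 < i"
    using v by linarith
  then show thesis
  proof cases
    case 1
    then show thesis using that[of "[v]"] v(1) by simp
  next
    case 2
    then show thesis
      using that[of "[v, {1, 2}]"] hub_spoke_in_spokes[of j n] v by (simp add: insert_commute)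
  next
    case 3
    then show thesis
      using that[of "[v, {1, 2}]"] outer_spoke_in_spokes[of 2 n j] v by (simp add: insert_commute)
  next
    case 4
    have "{v, {1, i}} \<in> spokes n"
      using outer_spoke_in_spokes[of i n j] v 4 by (simp add: insert_commute)
    moreover have "{{1, i}, {1, 2}} \<in> spokes n"
      using hub_spoke_in_spokes[of i n] v 4 by (simp add: insert_commute)
    ultimately show thesis using that[of "[v, {1, i}, {1, 2}]"] by simp
  qed
qed

lemma graph_dist_spokes_le_4:
  assumes "u \<in> pairV n" "v \<in> pairV n"
  shows "graph_dist (spokes n) u v \<le> 4"
proof -
  obtain xs where "is_walk (spokes n) xs" "hd xs = u" "last xs = {1, 2}" "length xs \<le> 3"
    using walk_to_hub[OF assms(1)] .
  moreover obtain ys where "is_walk (spokes n) ys" "hd ys = v" "last ys = {1, 2}" "length ys \<le> 3"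
    using walk_to_hub[OF assms(2)] .
  ultimately have "graph_dist (spokes n) u v \<le> enat (length xs + length ys - 2)"
    by (intro graph_dist_le_via)
  also have "\<dots> \<le> 4"
    using \<open>length xs \<le> 3\<close> \<open>length ys \<le> 3\<close> by (simp add: numeral_eq_enat)
  finally show ?thesis .
qed

theorem lemma9:
  fixes n :: nat
  assumes "n > 0"
  shows "\<exists>E'. E' \<subseteq> pairE n \<and> card E' \<le> n ^ 2 \<and>
    (\<forall>v1 \<in> pairV n. \<forall>v2 \<in> pairV n.
       graph_dist E' v1 v2 \<noteq> \<infinity> \<and>
       real (the_enat (graph_dist E' v1 v2)) \<le> 4 * (log 2 (real n) + 1))"
proof (intro exI[of _ "spokes n"] conjI ballI)
  show "spokes n \<subseteq> pairE n"
    by (simp add: spokes_def)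
  show "card (spokes n) \<le> n ^ 2"
    by (rule card_spokes_le)
  fix v1 v2 assume "v1 \<in> pairV n" "v2 \<in> pairV n"
  then have le4: "graph_dist (spokes n) v1 v2 \<le> enat 4"
    using graph_dist_spokes_le_4 by (simp add: numeral_eq_enat)
  then obtain k where k: "graph_dist (spokes n) v1 v2 = enat k" "k \<le> 4"
    using enat_ile by fastforce
  then show "graph_dist (spokes n) v1 v2 \<noteq> \<infinity>" by simp
  have "0 \<le> log 2 (real n)" using assms by simp
  then show "real (the_enat (graph_dist (spokes n) v1 v2)) \<le> 4 * (log 2 (real n) + 1)"
    using k by simp
qed

end
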